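(* Let $\Sigma=\{\mathtt{a},\mathtt{b},\mathtt{c}\}$. Define $F_0=\mathtt{a}$, $F_1=\mathtt{ab}$, and $F_i=F_{i-1}\cdot F_{i-2}$ for $i\ge 2$. Then the language $L_{\mathsf{fib}}=\{\mathtt{c}F_0\mathtt{c}F_1\mathtt{c}\cdots\mathtt{c}F_n\mathtt{c} : n\in\mathbb{N}\}$ belongs to $\mathcal{L}(\mathsf{FC})$.
   Context: For $w \in \Sigma^*$, $\mathsf{Facs}(w)$ is the set of all factors of $w$. The structure $\mathfrak{A}_w$ representing $w$ has universe $\mathsf{Facs}(w)\cup\{\perp\}$, a ternary relation $R_\circ=\{(x,y,z)\in\mathsf{Facs}(w)^3 : x=y\cdot z\}$, for each letter a constant interpreted as that letter if it occurs in $w$ and as $\perp$ otherwise, and a constant $\varepsilon$ interpreted as the empty word. $\mathsf{FC}$ is first-order logic over such structures, with atomic formulas $(x \mathbin{\dot=} y\cdot z)$ (meaning $R_\circ(x,y,z)$) where $x,y,z$ are variables, letters of $\Sigma$, or $\varepsilon$, closed under $\land,\lor,\neg,\exists,\forall$; quantified variables range over $\mathsf{Facs}(w)$. For a sentence $\varphi$, $\mathcal{L}(\varphi)=\{w\in\Sigma^*:\mathfrak{A}_w\models\varphi\}$, and $\mathcal{L}(\mathsf{FC})$ is the class of all such languages. *)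

theory Defs
  imports Main "HOL-Library.Sublist"
begin

datatype sym = a | b | c

datatype fc_term = FVar nat | FLet sym | FEps

datatype fc =
    FCat fc_term fc_term fc_term
  | FNot fc
  | FAnd fc fc
  | FOr fc fc
  | FEx nat fc
  | FAll nat fc

fun fv_term :: "fc_term \<Rightarrow> nat set" where
  "fv_term (FVar x) = {x}"
| "fv_term (FLet _) = {}"
| "fv_term FEps = {}"

fun fv :: "fc \<Rightarrow> nat set" where
  "fv (FCat x y z) = fv_term x \<union> fv_term y \<union> fv_term z"
| "fv (FNot \<phi>) = fv \<phi>"
| "fv (FAnd \<phi> \<psi>) = fv \<phi> \<union> fv \<psi>"
| "fv (FOr \<phi> \<psi>) = fv \<phi> \<union> fv \<psi>"
| "fv (FEx x \<phi>) = fv \<phi> - {x}"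
| "fv (FAll x \<phi>) = fv \<phi> - {x}"

definition Facs :: "sym list \<Rightarrow> sym list set" where
  "Facs w = {u. sublist u w}"

text \<open>Elements of the universe of A_w: factors of w ("Some u") or bottom ("None").
  A letter constant denotes that letter if it occurs in w, otherwise bottom.\<close>
fun eval_term :: "sym list \<Rightarrow> (nat \<Rightarrow> sym list option) \<Rightarrow> fc_term \<Rightarrow> sym list option" where
  "eval_term w \<sigma> (FVar x) = \<sigma> x"
| "eval_term w \<sigma> (FLet s) = (if s \<in> set w then Some [s] else None)"
| "eval_term w \<sigma> FEps = Some []"

fun sat :: "sym list \<Rightarrow> (nat \<Rightarrow> sym list option) \<Rightarrow> fc \<Rightarrow> bool" where
  "sat w \<sigma> (FCat x y z) =
     (\<exists>u v t. eval_term w \<sigma> x = Some u \<and> eval_term w \<sigma> y = Some v \<and> eval_term w \<sigma> z = Some t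
        \<and> u \<in> Facs w \<and> v \<in> Facs w \<and> t \<in> Facs w \<and> u = v @ t)"
| "sat w \<sigma> (FNot \<phi>) = (\<not> sat w \<sigma> \<phi>)"
| "sat w \<sigma> (FAnd \<phi> \<psi>) = (sat w \<sigma> \<phi> \<and> sat w \<sigma> \<psi>)"
| "sat w \<sigma> (FOr \<phi> \<psi>) = (sat w \<sigma> \<phi> \<or> sat w \<sigma> \<psi>)"
| "sat w \<sigma> (FEx x \<phi>) = (\<exists>u \<in> Facs w. sat w (\<sigma>(x := Some u)) \<phi>)"
| "sat w \<sigma> (FAll x \<phi>) = (\<forall>u \<in> Facs w. sat w (\<sigma>(x := Some u)) \<phi>)"

definition sentence :: "fc \<Rightarrow> bool" where
  "sentence \<phi> \<longleftrightarrow> fv \<phi> = {}"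

text \<open>L(phi) for a sentence phi (the assignment is irrelevant for sentences).\<close>
definition fc_lang :: "fc \<Rightarrow> sym list set" where
  "fc_lang \<phi> = {w. sat w (\<lambda>_. None) \<phi>}"

definition FC_languages :: "sym list set set" where
  "FC_languages = {fc_lang \<phi> | \<phi>. sentence \<phi>}"

fun fibw :: "nat \<Rightarrow> sym list" where
  "fibw 0 = [a]"
| "fibw (Suc 0) = [a, b]"
| "fibw (Suc (Suc n)) = fibw (Suc n) @ fibw n"

definition L_fib :: "sym list set" where
  "L_fib = {concat (map (\<lambda>i. c # fibw i) [0..<Suc n]) @ [c] | n. True}"

end

theory Submission
  imports Defs
begin

text \<open>A word belongs to \<open>L_fib\<close> iff it is \<open>cac\<close> or starts with \<open>cacabc\<close>, ends with \<open>c\<close>,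
  and every factor \<open>c x c y c z c\<close> with \<open>c\<close>-free \<open>x, y, z\<close> satisfies \<open>z = y x\<close>.
  Indeed, three consecutive \<open>c\<close>-delimited blocks of a word of \<open>L_fib\<close> are consecutive
  Fibonacci words; conversely, the block condition forces every block after \<open>F\<^sub>0, F\<^sub>1\<close>
  to be the next Fibonacci word. All three conditions are first-order over factors and
  concatenation, once a variable is pinned to the whole word as the factor containing
  every factor.\<close>

lemma fibw_not_c: "c \<notin> set (fibw n)"
  by (induction n rule: fibw.induct) auto

definition sep_blocks :: "'a \<Rightarrow> 'a list list \<Rightarrow> 'a list" where
  "sep_blocks s us = concat (map (\<lambda>u. u @ [s]) us)"

lemma sep_blocks_simps [simp]:
  "sep_blocks s [] = []"
  "sep_blocks s (u # us) = u @ s # sep_blocks s us"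
  "sep_blocks s (us @ vs) = sep_blocks s us @ sep_blocks s vs"
  by (simp_all add: sep_blocks_def)

lemma Cons_sep_blocks: "s # sep_blocks s us = concat (map ((#) s) us) @ [s]"
  by (induction us) auto

lemma append_sep_eq_append_sep_iff:
  assumes "s \<notin> set u" and "s \<notin> set v"
  shows "u @ s # x = v @ s # y \<longleftrightarrow> u = v \<and> x = y"
  using assms
proof (induction u arbitrary: v)
  case Nil then show ?case by (cases v) auto
next
  case (Cons a u) then show ?case by (cases v) auto
qed

lemma sep_blocks_split_at_sep:
  assumes "\<forall>u \<in> set us. s \<notin> set u" and "sep_blocks s us = p @ s # q"
  shows "\<exists>us1 us2. us = us1 @ us2 \<and> q = sep_blocks s us2"
  using assms
proof (induction us arbitrary: p)
  case Nil then show ?case by simp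
next
  case (Cons u us)
  then have eq: "u @ s # sep_blocks s us = p @ s # q" by simp
  have u: "s \<notin> set u" using Cons.prems(1) by simp
  consider "q = sep_blocks s us" | p' where "sep_blocks s us = p' @ s # q"
  proof (cases "s \<in> set p")
    case True
    then obtain p1 p' where "p = p1 @ s # p'" "s \<notin> set p1" by (blast dest: split_list_first)
    with eq u have "sep_blocks s us = p' @ s # q" by (simp add: append_sep_eq_append_sep_iff)
    then show ?thesis using that by blast
  next
    case False
    with eq u show ?thesis using that by (simp add: append_sep_eq_append_sep_iff)
  qed
  then show ?case
  proof cases
    case 1 then show ?thesis by (intro exI[of _ "[u]"] exI[of _ us]) simp
  next
    case 2
    with Cons obtain us1 us2 where "us = us1 @ us2" "q = sep_blocks s us2" by auto
    then show ?thesis by (intro exI[of _ "u # us1"] exI[of _ us2]) simp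
  qed
qed

lemma sep_blocks_prefixD:
  assumes "\<forall>u \<in> set us. s \<notin> set u" and "\<forall>x \<in> set xs. s \<notin> set x"
    and "sep_blocks s us = sep_blocks s xs @ r"
  shows "prefix xs us"
  using assms
proof (induction xs arbitrary: us)
  case (Cons x xs)
  then obtain u us' where "us = u # us'" by (cases us) auto
  with Cons show ?case by (auto simp: append_sep_eq_append_sep_iff)
qed simp

lemma sublist_sep_blocks_iff:
  assumes "\<forall>u \<in> set us. s \<notin> set u" and "\<forall>x \<in> set xs. s \<notin> set x"
  shows "sublist (s # sep_blocks s xs) (s # sep_blocks s us) \<longleftrightarrow> sublist xs us"
proof
  assume "sublist (s # sep_blocks s xs) (s # sep_blocks s us)"
  then obtain p q where pq: "s # sep_blocks s us = p @ (s # sep_blocks s xs) @ q"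
    by (auto simp: sublist_def)
  obtain us1 us2 where "us = us1 @ us2" "sep_blocks s us2 = sep_blocks s xs @ q"
  proof (cases p)
    case Nil
    with pq that show ?thesis by auto
  next
    case (Cons p0 p')
    with pq have "sep_blocks s us = p' @ s # sep_blocks s xs @ q" by auto
    with assms(1) sep_blocks_split_at_sep that show ?thesis by metis
  qed
  moreover from this assms have "prefix xs us2"
    by (intro sep_blocks_prefixD) auto
  ultimately show "sublist xs us"
    by (auto simp: prefix_def sublist_def)
next
  assume "sublist xs us"
  then obtain p q where "us = p @ xs @ q" by (auto simp: sublist_def)
  moreover have "s # sep_blocks s p = concat (map ((#) s) p) @ [s]"
    by (rule Cons_sep_blocks)
  ultimately have "s # sep_blocks s us = concat (map ((#) s) p) @ (s # sep_blocks s xs) @ sep_blocks s q"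
    by simp
  then show "sublist (s # sep_blocks s xs) (s # sep_blocks s us)"
    by (metis sublist_appendI)
qed

definition Lfib_word :: "nat \<Rightarrow> sym list" where
  "Lfib_word n = c # sep_blocks c (map fibw [0..<Suc n])"

lemma L_fib_eq_range: "L_fib = range Lfib_word"
proof -
  have "concat (map (\<lambda>i. c # fibw i) [0..<Suc n]) @ [c] = Lfib_word n" for n
    by (simp only: Lfib_word_def Cons_sep_blocks map_map comp_def)
  then show ?thesis by (auto simp: L_fib_def)
qed

lemma Lfib_word_Suc: "Lfib_word (Suc n) = Lfib_word n @ fibw (Suc n) @ [c]"
  by (simp add: Lfib_word_def)

lemma Lfib_word_0_1:
  "Lfib_word 0 = [c, a, c]"
  "Lfib_word (Suc 0) = [c, a, c, a, b, c]"
  by (simp_all add: Lfib_word_def)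

lemma prefix_Lfib_word_mono:
  assumes "m \<le> n"
  shows "prefix (Lfib_word m) (Lfib_word n)"
proof -
  have "[0..<Suc n] = [0..<Suc m] @ [Suc m..<Suc n]"
    using upt_add_eq_append[of 0 "Suc m" "n - m"] assms by simp
  then show ?thesis by (simp add: Lfib_word_def)
qed

lemma length_Lfib_word: "n < length (Lfib_word n)"
  by (induction n) (simp_all add: Lfib_word_Suc Lfib_word_def)

lemma fibw_consecutive:
  assumes "sublist [x, y, z] (map fibw [0..<n])"
  shows "z = y @ x"
proof -
  from assms obtain p q where pq: "map fibw [0..<n] = p @ [x, y, z] @ q"
    by (auto simp: sublist_def)
  define i where "i = length p"
  have "length p + 3 \<le> n" using arg_cong[OF pq, of length] by simp
  then have "x = fibw i" "y = fibw (Suc i)" "z = fibw (Suc (Suc i))"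
    using arg_cong[OF pq, of "\<lambda>l. l ! i"] arg_cong[OF pq, of "\<lambda>l. l ! Suc i"]
      arg_cong[OF pq, of "\<lambda>l. l ! Suc (Suc i)"]
    by (simp_all add: i_def nth_append)
  then show ?thesis by simp
qed

definition fib_shaped :: "sym list \<Rightarrow> bool" where
  "fib_shaped w \<longleftrightarrow>
     (w = [c, a, c] \<or> prefix [c, a, c, a, b, c] w) \<and> (\<exists>u. w = u @ [c]) \<and>
     (\<forall>x y z. c \<notin> set x \<longrightarrow> c \<notin> set y \<longrightarrow> c \<notin> set z \<longrightarrow>
        sublist (c # x @ c # y @ c # z @ [c]) w \<longrightarrow> z = y @ x)"

lemma fib_shaped_Lfib_word: "fib_shaped (Lfib_word n)"
proof -
  have start: "Lfib_word n = [c, a, c] \<or> prefix [c, a, c, a, b, c] (Lfib_word n)"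
    using prefix_Lfib_word_mono[of 1 n] by (cases n) (auto simp: Lfib_word_0_1)
  have "\<exists>u. Lfib_word n = u @ [c]"
    by (simp add: Lfib_word_def Cons_sep_blocks)
  moreover have "z = y @ x"
    if "c \<notin> set x" "c \<notin> set y" "c \<notin> set z"
      and "sublist (c # x @ c # y @ c # z @ [c]) (Lfib_word n)" for x y z
  proof -
    have "sublist (c # sep_blocks c [x, y, z]) (c # sep_blocks c (map fibw [0..<Suc n]))"
      using that(4) by (simp add: Lfib_word_def)
    then have "sublist [x, y, z] (map fibw [0..<Suc n])"
      using that(1-3) by (subst (asm) sublist_sep_blocks_iff) (auto simp: fibw_not_c)
    then show ?thesis by (rule fibw_consecutive)
  qed
  ultimately show ?thesis using start by (auto simp: fib_shaped_def)
qed

lemma fib_shaped_extend: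
  assumes shaped: "fib_shaped w" and "prefix (Lfib_word (Suc k)) w" "w \<noteq> Lfib_word (Suc k)"
  shows "prefix (Lfib_word (Suc (Suc k))) w"
proof -
  let ?fs = "map fibw [0..<Suc (Suc k)]"
  obtain r where r: "w = Lfib_word (Suc k) @ r" "r \<noteq> []"
    using assms(2,3) by (auto simp: prefix_def)
  from shaped obtain u where "w = u @ [c]" by (auto simp: fib_shaped_def)
  with r have "c \<in> set r" by (metis last_appendR last_in_set last_snoc)
  then obtain z r' where zr: "r = z @ c # r'" "c \<notin> set z" by (blast dest: split_list_first)
  have "c # sep_blocks c (?fs @ [z]) = Lfib_word (Suc k) @ z @ [c]"
    by (simp add: Lfib_word_def)
  moreover have "prefix (Lfib_word (Suc k) @ z @ [c]) w" by (simp add: r zr)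
  ultimately have "prefix (c # sep_blocks c (?fs @ [z])) w" by (simp only:)
  moreover have "sublist [fibw k, fibw (Suc k), z] (?fs @ [z])"
    by (rule suffix_imp_sublist) (simp add: suffix_def)
  then have "sublist (c # sep_blocks c [fibw k, fibw (Suc k), z]) (c # sep_blocks c (?fs @ [z]))"
    using zr(2) by (subst sublist_sep_blocks_iff) (auto simp: fibw_not_c)
  ultimately have "sublist (c # fibw k @ c # fibw (Suc k) @ c # z @ [c]) w"
    by (auto intro: sublist_order.order_trans)
  then have "z = fibw (Suc (Suc k))"
    using shaped zr(2) by (simp add: fib_shaped_def fibw_not_c)
  then show ?thesis by (simp add: r zr Lfib_word_Suc)
qed

lemma fib_shaped_in_range:
  assumes "fib_shaped w"
  shows "w \<in> range Lfib_word"
proof (rule ccontr)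
  assume "w \<notin> range Lfib_word"
  then have "prefix (Lfib_word (Suc k)) w" for k
  proof (induction k)
    case 0
    then have "w \<noteq> Lfib_word 0" by blast
    then show ?case using assms by (auto simp: fib_shaped_def Lfib_word_0_1)
  next
    case (Suc k)
    then show ?case using assms fib_shaped_extend by blast
  qed
  from prefix_length_le[OF this, of "length w"] show False
    using length_Lfib_word[of "Suc (length w)"] by linarith
qed

lemma fib_shaped_iff: "fib_shaped w \<longleftrightarrow> w \<in> L_fib"
  using fib_shaped_in_range fib_shaped_Lfib_word by (auto simp: L_fib_eq_range)

lemma Facs_self [simp]: "w \<in> Facs w"
  by (simp add: Facs_def)

lemma sublist_in_Facs: "sublist u v \<Longrightarrow> v \<in> Facs w \<Longrightarrow> u \<in> Facs w"
  unfolding Facs_def using sublist_order.order_trans by blast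

lemma prefix_in_Facs: "prefix u v \<Longrightarrow> v \<in> Facs w \<Longrightarrow> u \<in> Facs w"
  by (blast intro: sublist_in_Facs)

lemma set_subset_if_Facs: "u \<in> Facs w \<Longrightarrow> set u \<subseteq> set w"
  unfolding Facs_def using set_mono_sublist by blast

lemma Facs_singleton_iff [simp]: "[s] \<in> Facs w \<longleftrightarrow> s \<in> set w"
  by (auto simp: Facs_def sublist_def in_set_conv_decomp)

lemma eval_term_FLet_eq_Some [simp]:
  "eval_term w \<sigma> (FLet s) = Some u \<longleftrightarrow> s \<in> set w \<and> u = [s]"
  by auto

declare eval_term.simps(2) [simp del]

definition fc_imp :: "fc \<Rightarrow> fc \<Rightarrow> fc" where
  "fc_imp \<phi> \<psi> = FOr (FNot \<phi>) \<psi>"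

lemma sat_fc_imp [simp]: "sat w \<sigma> (fc_imp \<phi> \<psi>) \<longleftrightarrow> (sat w \<sigma> \<phi> \<longrightarrow> sat w \<sigma> \<psi>)"
  by (simp add: fc_imp_def)

definition fc_avoids :: "sym \<Rightarrow> nat \<Rightarrow> fc" where
  "fc_avoids s v = FNot (FEx 11 (FEx 12 (FEx 13
     (FAnd (FCat (FVar 13) (FVar 11) (FLet s)) (FCat (FVar v) (FVar 13) (FVar 12))))))"

lemma sat_fc_avoids:
  assumes "\<sigma> v = Some x" "x \<in> Facs w" "v \<notin> {11, 12, 13}"
  shows "sat w \<sigma> (fc_avoids s v) \<longleftrightarrow> s \<notin> set x"
proof -
  have "sat w \<sigma> (fc_avoids s v) \<longleftrightarrow>
      \<not> (\<exists>p\<in>Facs w. \<exists>q\<in>Facs w. p @ [s] \<in> Facs w \<and> x = p @ s # q)"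
    using assms by (auto simp: fc_avoids_def dest: set_subset_if_Facs)
  also have "\<dots> \<longleftrightarrow> s \<notin> set x"
  proof -
    have "(\<exists>p\<in>Facs w. \<exists>q\<in>Facs w. p @ [s] \<in> Facs w \<and> x = p @ s # q) \<longleftrightarrow> s \<in> set x"
    proof
      assume "s \<in> set x"
      then obtain p q where x: "x = p @ s # q" by (metis split_list)
      have "sublist (p @ [s]) x" "sublist q x"
        unfolding x using sublist_append_leftI[of q "p @ [s]"] sublist_append_rightI[of "p @ [s]" q]
        by simp_all
      then have "p @ [s] \<in> Facs w" "q \<in> Facs w" "p \<in> Facs w"
        using assms(2) by (meson sublist_in_Facs sublist_append_rightI)+
      then show "\<exists>p\<in>Facs w. \<exists>q\<in>Facs w. p @ [s] \<in> Facs w \<and> x = p @ s # q"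
        using x by blast
    qed auto
    then show ?thesis by blast
  qed
  finally show ?thesis .
qed

text \<open>In the formulas below, variable 0 holds the whole word.\<close>

definition fc_whole_word :: fc where
  "fc_whole_word = FAll 1 (FEx 2 (FEx 3 (FEx 4
     (FAnd (FCat (FVar 4) (FVar 2) (FVar 1)) (FCat (FVar 0) (FVar 4) (FVar 3))))))"

lemma sat_fc_whole_word:
  assumes "\<sigma> 0 = Some W" "W \<in> Facs w"
  shows "sat w \<sigma> fc_whole_word \<longleftrightarrow> W = w"
proof
  assume "sat w \<sigma> fc_whole_word"
  then obtain p q where "W = p @ w @ q"
    using assms(1) by (force simp: fc_whole_word_def)
  moreover have "length W \<le> length w"
    using assms(2) by (simp add: Facs_def sublist_length_le)
  ultimately show "W = w" by simp
next
  assume "W = w"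
  have "\<exists>p\<in>Facs w. \<exists>q\<in>Facs w. p @ u \<in> Facs w \<and> w = p @ u @ q" if "u \<in> Facs w" for u
  proof -
    from that obtain p q where "w = p @ u @ q" by (auto simp: Facs_def sublist_def)
    moreover from this have "p \<in> Facs w" "q \<in> Facs w" "p @ u \<in> Facs w"
      using sublist_append_leftI[of q "p @ u"] by (auto simp: Facs_def)
    ultimately show ?thesis by blast
  qed
  then show "sat w \<sigma> fc_whole_word"
    using assms(1) \<open>W = w\<close> by (simp add: fc_whole_word_def)
qed

definition fc_fib_start :: fc where
  "fc_fib_start =
     FOr (FEx 5 (FAnd (FCat (FVar 5) (FLet c) (FLet a)) (FCat (FVar 0) (FVar 5) (FLet c))))
       (FEx 5 (FEx 6 (FEx 7 (FEx 8 (FEx 9 (FEx 10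
         (FAnd (FCat (FVar 5) (FLet c) (FLet a))
         (FAnd (FCat (FVar 6) (FVar 5) (FLet c))
         (FAnd (FCat (FVar 7) (FVar 6) (FLet a))
         (FAnd (FCat (FVar 8) (FVar 7) (FLet b))
         (FAnd (FCat (FVar 9) (FVar 8) (FLet c))
           (FCat (FVar 0) (FVar 9) (FVar 10)))))))))))))"

lemma sat_fc_fib_start:
  assumes "\<sigma> 0 = Some w"
  shows "sat w \<sigma> fc_fib_start \<longleftrightarrow> w = [c, a, c] \<or> prefix [c, a, c, a, b, c] w"
proof
  assume "sat w \<sigma> fc_fib_start"
  then show "w = [c, a, c] \<or> prefix [c, a, c, a, b, c] w"
    using assms by (auto simp: fc_fib_start_def prefix_def)
next
  assume "w = [c, a, c] \<or> prefix [c, a, c, a, b, c] w"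
  then show "sat w \<sigma> fc_fib_start"
  proof
    assume "w = [c, a, c]"
    then show ?thesis
      using assms prefix_in_Facs[of "[c, a]" w w] by (simp add: fc_fib_start_def)
  next
    assume "prefix [c, a, c, a, b, c] w"
    then obtain r where w: "w = [c, a, c, a, b, c] @ r" by (auto simp: prefix_def)
    then have "prefix [c, a] w" "prefix [c, a, c] w" "prefix [c, a, c, a] w"
      "prefix [c, a, c, a, b] w" "prefix [c, a, c, a, b, c] w"
      by simp_all
    then have "[c, a] \<in> Facs w" "[c, a, c] \<in> Facs w" "[c, a, c, a] \<in> Facs w"
      "[c, a, c, a, b] \<in> Facs w" "[c, a, c, a, b, c] \<in> Facs w"
      by (meson prefix_in_Facs Facs_self)+
    moreover have "r \<in> Facs w"
      using w sublist_append_leftI[of r "[c, a, c, a, b, c]"] by (simp add: Facs_def)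
    ultimately show ?thesis
      using assms w by (simp add: fc_fib_start_def)
  qed
qed

definition fc_ends_c :: fc where
  "fc_ends_c = FEx 5 (FCat (FVar 0) (FVar 5) (FLet c))"

lemma sat_fc_ends_c:
  assumes "\<sigma> 0 = Some w"
  shows "sat w \<sigma> fc_ends_c \<longleftrightarrow> (\<exists>u. w = u @ [c])"
  using assms by (auto simp: fc_ends_c_def Facs_def)

definition fc_fib_blocks :: fc where
  "fc_fib_blocks = FAll 1 (FAll 2 (FAll 3 (FAll 4 (FAll 5 (FAll 6 (FAll 7 (FAll 8 (FAll 9
     (fc_imp
       (FAnd (fc_avoids c 1) (FAnd (fc_avoids c 2) (FAnd (fc_avoids c 3)
       (FAnd (FCat (FVar 4) (FLet c) (FVar 1))
       (FAnd (FCat (FVar 5) (FVar 4) (FLet c))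
       (FAnd (FCat (FVar 6) (FVar 5) (FVar 2))
       (FAnd (FCat (FVar 7) (FVar 6) (FLet c))
       (FAnd (FCat (FVar 8) (FVar 7) (FVar 3))
         (FCat (FVar 9) (FVar 8) (FLet c))))))))))
       (FCat (FVar 3) (FVar 2) (FVar 1)))))))))))"

lemma sat_fc_fib_blocks:
  assumes "\<sigma> 0 = Some w"
  shows "sat w \<sigma> fc_fib_blocks \<longleftrightarrow>
    (\<forall>x y z. c \<notin> set x \<longrightarrow> c \<notin> set y \<longrightarrow> c \<notin> set z \<longrightarrow>
       sublist (c # x @ c # y @ c # z @ [c]) w \<longrightarrow> z = y @ x)"
proof -
  have factors: "x \<in> Facs w \<and> y \<in> Facs w \<and> z \<in> Facs w \<and> c \<in> set w \<and>
      c # x \<in> Facs w \<and> c # x @ [c] \<in> Facs w \<and> c # x @ c # y \<in> Facs w \<and>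
      c # x @ c # y @ [c] \<in> Facs w \<and> c # x @ c # y @ c # z \<in> Facs w \<and>
      c # x @ c # y @ c # z @ [c] \<in> Facs w"
    if "c # x @ c # y @ c # z @ [c] \<in> Facs w" for x y z
  proof -
    let ?t = "c # x @ c # y @ c # z @ [c]"
    have "sublist [c] ?t" "sublist x ?t" "sublist y ?t" "sublist z ?t"
      using sublist_appendI[of x "[c]"] sublist_appendI[of y "c # x @ [c]"]
        sublist_appendI[of z "c # x @ c # y @ [c]"] by auto
    moreover have "prefix (c # x) ?t" "prefix (c # x @ [c]) ?t" "prefix (c # x @ c # y) ?t"
      "prefix (c # x @ c # y @ [c]) ?t" "prefix (c # x @ c # y @ c # z) ?t"
      by simp_all
    ultimately show ?thesis using that by (meson Facs_singleton_iff prefix_in_Facs sublist_in_Facs)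
  qed
  have "sublist u w \<longleftrightarrow> u \<in> Facs w" for u
    by (simp add: Facs_def)
  then show ?thesis
    using assms by (simp add: fc_fib_blocks_def sat_fc_avoids) (use factors in blast)
qed

definition fc_Lfib :: fc where
  "fc_Lfib = FEx 0 (FAnd fc_whole_word (FAnd fc_fib_start (FAnd fc_ends_c fc_fib_blocks)))"

lemma sat_fc_Lfib: "sat w \<sigma> fc_Lfib \<longleftrightarrow> fib_shaped w"
proof -
  have "sat w \<sigma> fc_Lfib \<longleftrightarrow> (\<exists>W\<in>Facs w. W = w \<and>
      sat w (\<sigma>(0 := Some W)) (FAnd fc_fib_start (FAnd fc_ends_c fc_fib_blocks)))"
    by (auto simp: fc_Lfib_def sat_fc_whole_word)
  also have "\<dots> \<longleftrightarrow> fib_shaped w"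
    by (simp add: sat_fc_fib_start sat_fc_ends_c sat_fc_fib_blocks fib_shaped_def)
  finally show ?thesis .
qed

lemma sentence_fc_Lfib: "sentence fc_Lfib"
  by (simp add: sentence_def fc_Lfib_def fc_whole_word_def fc_fib_start_def fc_ends_c_def
      fc_fib_blocks_def fc_imp_def fc_avoids_def insert_Diff_if)

theorem proposition4p1:
  shows "L_fib \<in> FC_languages"
proof -
  have "fc_lang fc_Lfib = L_fib"
    by (auto simp: fc_lang_def sat_fc_Lfib fib_shaped_iff)
  then show ?thesis
    using sentence_fc_Lfib by (auto simp: FC_languages_def)
qed

end
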